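(* Let $i,n$ be natural numbers and let $A$ be a brace of cardinality $p^n$, where $p$ is a prime with $p>n+1$. Let $I$ be an ideal of $A$. Then $p^iI=\{p^ia: a\in I\}$ is an ideal of $A$.
   Context: A (left) brace is a set $A$ with binary operations $+,\circ$ such that $(A,+)$ is an abelian group, $(A,\circ)$ is a group, and $a\circ(b+c)+a=a\circ b+a\circ c$ for all $a,b,c$. Write $a*b=a\circ b-a-b$. An ideal of a brace $A$ is a subgroup $I$ of $(A,+)$ which is a normal subgroup of $(A,\circ)$ and satisfies $a*x\in I$ for all $a\in A$, $x\in I$; equivalently, an additive subgroup $I$ with $A*I\subseteq I$ and $I*A\subseteq I$. $p^ia$ denotes the $p^i$-fold additive multiple of $a$. *)

theory Defs
  imports "HOL-Algebra.Algebra" "HOL-Computational_Algebra.Primes"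
begin

text \<open>A (left) brace is given by two group structures on the same carrier:
  Ad is the additive (abelian) group (A,+), Ci is the multiplicative group (A,\<circ>).\<close>

definition brace :: "'a monoid \<Rightarrow> 'a monoid \<Rightarrow> bool" where
  "brace Ad Ci \<longleftrightarrow> comm_group Ad \<and> group Ci \<and> carrier Ci = carrier Ad \<and>
     (\<forall>a\<in>carrier Ad. \<forall>b\<in>carrier Ad. \<forall>c\<in>carrier Ad.
        (a \<otimes>\<^bsub>Ci\<^esub> (b \<otimes>\<^bsub>Ad\<^esub> c)) \<otimes>\<^bsub>Ad\<^esub> a
          = (a \<otimes>\<^bsub>Ci\<^esub> b) \<otimes>\<^bsub>Ad\<^esub> (a \<otimes>\<^bsub>Ci\<^esub> c))"

definition brace_star :: "'a monoid \<Rightarrow> 'a monoid \<Rightarrow> 'a \<Rightarrow> 'a \<Rightarrow> 'a" where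
  "brace_star Ad Ci a b =
     ((a \<otimes>\<^bsub>Ci\<^esub> b) \<otimes>\<^bsub>Ad\<^esub> inv\<^bsub>Ad\<^esub> a) \<otimes>\<^bsub>Ad\<^esub> inv\<^bsub>Ad\<^esub> b"

definition brace_ideal :: "'a monoid \<Rightarrow> 'a monoid \<Rightarrow> 'a set \<Rightarrow> bool" where
  "brace_ideal Ad Ci I \<longleftrightarrow> subgroup I Ad \<and> I \<lhd> Ci \<and>
     (\<forall>a\<in>carrier Ad. \<forall>x\<in>I. brace_star Ad Ci a x \<in> I)"

end

theory Submission
  imports Defs
begin

text \<open>
  With \<open>\<lambda>_a(b) = a \<circ> b - a\<close>, the map \<open>a \<mapsto> \<lambda>_a\<close> is an action of \<open>(A, \<circ>)\<close> on \<open>(A, +)\<close> by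
  automorphisms, and \<open>a * b = \<lambda>_a(b) - b\<close>. Let \<open>F_0 = 0\<close> and \<open>F_(k+1) = {m. A * m \<subseteq> F_k}\<close>; these
  are \<open>\<lambda>\<close>-invariant additive subgroups. If \<open>F_k \<noteq> A\<close>, the \<open>p\<close>-group \<open>(A, \<circ>)\<close> permutes the
  \<open>p\<close>-power many cosets of \<open>F_k\<close> and fixes \<open>F_k\<close>, so it fixes a second coset \<open>m + F_k\<close>, that is
  \<open>m \<in> F_(k+1) - F_k\<close>. Hence \<open>F_n = A\<close> when \<open>|A| = p^n\<close>.

  Expanding powers in \<open>(A, \<circ>)\<close> gives \<open>y^(\<circ>m) = \<Sum>_(j<m) (m choose j+1) e_j\<close> with \<open>e_0 = y\<close> and
  \<open>e_(j+1) = y * e_j\<close>. For \<open>y \<in> I \<inter> F_k\<close> with \<open>k < p\<close> every term of \<open>y^(\<circ>p)\<close> is a multiple of \<open>p\<close>,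
  so \<open>y^(\<circ>p) = py + pw\<close> with \<open>w \<in> I \<inter> F_(k-1)\<close>, and hence \<open>py = y^(\<circ>p) \<circ> pw'\<close> with
  \<open>w' \<in> I \<inter> F_(k-1)\<close>. Induction on \<open>k\<close> then shows that \<open>pI\<close> is closed under conjugation in
  \<open>(A, \<circ>)\<close>. The other ideal axioms hold for every multiple \<open>kI\<close> because each \<open>\<lambda>_a\<close> is additive.
  Iterating gives \<open>p^i I\<close>.
\<close>

subsection \<open>Group actions and conjugation\<close>

lemma (in group) group_actionI:
  assumes closed: "\<And>g x. g \<in> carrier G \<Longrightarrow> x \<in> E \<Longrightarrow> \<phi> g x \<in> E"
    and extensional: "\<And>g. g \<in> carrier G \<Longrightarrow> \<phi> g \<in> extensional E"
    and one: "\<And>x. x \<in> E \<Longrightarrow> \<phi> \<one> x = x"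
    and mult: "\<And>g h x. g \<in> carrier G \<Longrightarrow> h \<in> carrier G \<Longrightarrow> x \<in> E \<Longrightarrow> \<phi> (g \<otimes> h) x = \<phi> g (\<phi> h x)"
  shows "group_action G E \<phi>"
proof -
  have Bij: "\<phi> g \<in> Bij E" if g: "g \<in> carrier G" for g
  proof -
    have "bij_betw (\<phi> g) E E"
      by (rule bij_betw_byWitness[where f' = "\<phi> (inv g)"])
        (use g closed one in \<open>auto simp flip: mult\<close>)
    then show ?thesis
      using extensional g by (simp add: Bij_def)
  qed
  have "\<phi> (g \<otimes> h) = compose E (\<phi> g) (\<phi> h)" if "g \<in> carrier G" "h \<in> carrier G" for g h
    using that extensional[of "g \<otimes> h"] mult
    by (intro extensionalityI[of _ E]) (auto simp: compose_def)
  then have "\<phi> \<in> hom G (BijGroup E)"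
    using Bij by (intro homI) (auto simp: BijGroup_def)
  then show ?thesis
    by (simp add: group_action_def group_hom_def group_hom_axioms_def group_BijGroup)
qed

lemma (in group_action) prime_dvd_card_singleton_orbits:
  assumes p: "Factorial_Ring.prime p" and order_G: "order G = p ^ n" and fin: "finite E"
    and dvd: "p dvd card E"
  shows "p dvd card {orb \<in> orbits G E \<phi>. card orb = 1}"
proof -
  define Orbs where "Orbs = orbits G E \<phi>"
  define S where "S = {orb \<in> Orbs. card orb = 1}"
  have fin_Orbs: "finite Orbs"
    unfolding Orbs_def using orbits_coverture fin by (metis finite_UnionD)
  have dvd_nontrivial: "p dvd card orb" if orb: "orb \<in> Orbs - S" for orb
  proof -
    obtain y where "y \<in> E" "orb = orbit G \<phi> y"
      using orb unfolding Orbs_def orbits_def by auto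
    then have "card orb dvd p ^ n"
      using orbit_stabilizer_theorem order_G by (metis dvd_triv_left)
    then obtain j where "card orb = p ^ j"
      using divides_primepow_nat[OF p] by blast
    moreover have "card orb \<noteq> 1"
      using orb unfolding S_def by simp
    ultimately show ?thesis
      by (cases j) auto
  qed
  have "card E = (\<Sum>orb\<in>Orbs. card orb)"
    using disjoint_sum[OF fin, of "\<lambda>_. 1::nat"] unfolding Orbs_def by simp
  also have "\<dots> = card S + (\<Sum>orb\<in>Orbs - S. card orb)"
    using sum.subset_diff[of S Orbs card] fin_Orbs unfolding S_def by simp
  moreover have "p dvd (\<Sum>orb\<in>Orbs - S. card orb)"
    using dvd_nontrivial by (intro dvd_sum) blast
  ultimately have "p dvd card S"
    using dvd by (metis dvd_add_left_iff)
  then show ?thesis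
    unfolding S_def Orbs_def .
qed

lemma (in group_action) prime_power_second_fixed_point:
  assumes p: "Factorial_Ring.prime p" and order_G: "order G = p ^ n" and fin: "finite E"
    and dvd: "p dvd card E" and x: "x \<in> E" and x_fixed: "\<And>g. g \<in> carrier G \<Longrightarrow> \<phi> g x = x"
  shows "\<exists>y\<in>E. y \<noteq> x \<and> (\<forall>g\<in>carrier G. \<phi> g y = y)"
proof -
  define S where "S = {orb \<in> orbits G E \<phi>. card orb = 1}"
  have "finite (orbits G E \<phi>)"
    using orbits_coverture fin by (metis finite_UnionD)
  then have fin_S: "finite S"
    unfolding S_def by simp
  have "orbit G \<phi> x = {x}"
    using x_fixed orbit_refl[OF x] unfolding orbit_def by auto
  then have x_S: "{x} \<in> S"
    unfolding S_def orbits_def using x by auto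
  moreover have "p dvd card S"
    unfolding S_def by (rule prime_dvd_card_singleton_orbits[OF p order_G fin dvd])
  ultimately have "p \<le> card S"
    using fin_S by (metis card_gt_0_iff dvd_imp_le empty_iff)
  then have "\<not> S \<subseteq> {{x}}"
    using prime_ge_2_nat[OF p] card_mono[of "{{x}}" S] by auto
  then obtain orb where orb: "orb \<in> S" "orb \<noteq> {x}"
    by blast
  then obtain y where y: "y \<in> E" "orb = orbit G \<phi> y"
    unfolding S_def orbits_def by auto
  have "card orb = 1" "y \<in> orb"
    using orb y orbit_refl unfolding S_def by auto
  then have "orb = {y}"
    by (metis card_1_singletonE singletonD)
  then have "\<phi> g y = y" if "g \<in> carrier G" for g
    using y that unfolding orbit_def by auto
  moreover have "y \<noteq> x"
    using orb(2) \<open>orb = {y}\<close> by simp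
  ultimately show ?thesis
    using y(1) by blast
qed

lemma (in group) conj_mult:
  assumes "c \<in> carrier G" "a \<in> carrier G" "b \<in> carrier G"
  shows "c \<otimes> (a \<otimes> b) \<otimes> inv c = (c \<otimes> a \<otimes> inv c) \<otimes> (c \<otimes> b \<otimes> inv c)"
  using assms by (simp add: m_assoc) (simp add: m_assoc[symmetric])

lemma (in group) conj_nat_pow:
  assumes c: "c \<in> carrier G" and y: "y \<in> carrier G"
  shows "c \<otimes> y [^] (m::nat) \<otimes> inv c = (c \<otimes> y \<otimes> inv c) [^] m"
proof (induction m)
  case 0
  show ?case using c by simp
next
  case (Suc m)
  have "c \<otimes> y [^] Suc m \<otimes> inv c = (c \<otimes> y [^] m \<otimes> inv c) \<otimes> (c \<otimes> y \<otimes> inv c)"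
    using conj_mult c y by simp
  then show ?case
    using Suc by simp
qed

locale left_brace =
  fixes Ad Ci :: "'a monoid"
  assumes brace: "brace Ad Ci"
begin

sublocale additive: comm_group Ad
  using brace unfolding brace_def by auto

sublocale circle: group Ci
  using brace unfolding brace_def by auto

abbreviation A where "A \<equiv> carrier Ad"
abbreviation add_A (infixl "\<boxplus>" 65) where "x \<boxplus> y \<equiv> x \<otimes>\<^bsub>Ad\<^esub> y"
abbreviation neg_A ("\<boxminus> _" [81] 80) where "\<boxminus> x \<equiv> inv\<^bsub>Ad\<^esub> x"
abbreviation zero_A ("\<zero>\<^sub>A") where "\<zero>\<^sub>A \<equiv> \<one>\<^bsub>Ad\<^esub>"
abbreviation nat_mult_A (infixr "\<bullet>" 75) where "k \<bullet> x \<equiv> x [^]\<^bsub>Ad\<^esub> (k::nat)"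
abbreviation circ (infixl "\<diamond>" 70) where "x \<diamond> y \<equiv> x \<otimes>\<^bsub>Ci\<^esub> y"
abbreviation circ_inv where "circ_inv x \<equiv> inv\<^bsub>Ci\<^esub> x"
abbreviation star (infixl "\<star>" 70) where "x \<star> y \<equiv> brace_star Ad Ci x y"

lemma carrier_circle [simp]: "carrier Ci = A"
  using brace unfolding brace_def by auto

lemma add_neg_cancel_left [simp]: "x \<in> A \<Longrightarrow> y \<in> A \<Longrightarrow> x \<boxplus> (\<boxminus> x \<boxplus> y) = y"
  by (simp add: additive.m_assoc[symmetric])

lemma left_distrib: "a \<in> A \<Longrightarrow> b \<in> A \<Longrightarrow> c \<in> A \<Longrightarrow> (a \<diamond> (b \<boxplus> c)) \<boxplus> a = (a \<diamond> b) \<boxplus> (a \<diamond> c)"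
  using brace unfolding brace_def by auto

lemma circ_closed [simp]: "a \<in> A \<Longrightarrow> b \<in> A \<Longrightarrow> a \<diamond> b \<in> A"
  using circle.m_closed by simp

lemma circ_inv_closed [simp]: "a \<in> A \<Longrightarrow> circ_inv a \<in> A"
  using circle.inv_closed by simp

lemma circle_one: "\<one>\<^bsub>Ci\<^esub> = \<zero>\<^sub>A"
proof -
  have one: "\<one>\<^bsub>Ci\<^esub> \<in> A"
    using circle.one_closed by simp
  have "\<zero>\<^sub>A \<boxplus> \<one>\<^bsub>Ci\<^esub> = \<zero>\<^sub>A \<boxplus> \<zero>\<^sub>A"
    using left_distrib[OF one additive.one_closed additive.one_closed] one by simp
  then show ?thesis
    using one by simp
qed

definition lambda :: "'a \<Rightarrow> 'a \<Rightarrow> 'a" where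
  "lambda a b = (a \<diamond> b) \<boxplus> \<boxminus> a"

lemma lambda_closed [simp]: "a \<in> A \<Longrightarrow> b \<in> A \<Longrightarrow> lambda a b \<in> A"
  unfolding lambda_def by simp

lemma circ_eq_add_lambda: "a \<in> A \<Longrightarrow> b \<in> A \<Longrightarrow> a \<diamond> b = a \<boxplus> lambda a b"
  unfolding lambda_def by (simp add: additive.m_ac)

lemma lambda_add:
  assumes "a \<in> A" "b \<in> A" "c \<in> A"
  shows "lambda a (b \<boxplus> c) = lambda a b \<boxplus> lambda a c"
proof -
  have "a \<diamond> (b \<boxplus> c) = (a \<diamond> b) \<boxplus> (a \<diamond> c) \<boxplus> \<boxminus> a"
    using left_distrib[OF assms] assms
    by (metis additive.inv_solve_right additive.m_closed circ_closed)
  then show ?thesis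
    unfolding lambda_def using assms by (simp add: additive.m_ac)
qed

lemma lambda_zero [simp]: "a \<in> A \<Longrightarrow> lambda a \<zero>\<^sub>A = \<zero>\<^sub>A"
  using lambda_add[of a "\<zero>\<^sub>A" "\<zero>\<^sub>A"] by (metis additive.l_cancel_one' lambda_closed additive.one_closed additive.r_one)

lemma lambda_neg: "a \<in> A \<Longrightarrow> b \<in> A \<Longrightarrow> lambda a (\<boxminus> b) = \<boxminus> lambda a b"
  using lambda_add[of a "\<boxminus> b" b]
  by (metis additive.inv_equality additive.inv_closed additive.l_inv lambda_closed lambda_zero)

lemma lambda_nat_mult: "a \<in> A \<Longrightarrow> b \<in> A \<Longrightarrow> lambda a (k \<bullet> b) = k \<bullet> lambda a b"
  by (induction k) (auto simp: lambda_add)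

lemma lambda_circ:
  assumes "a \<in> A" "b \<in> A" "c \<in> A"
  shows "lambda (a \<diamond> b) c = lambda a (lambda b c)"
proof -
  have "lambda a (lambda b c) = lambda a (b \<diamond> c) \<boxplus> \<boxminus> lambda a b"
    unfolding lambda_def[of b c] using assms by (simp add: lambda_add lambda_neg)
  also have "\<dots> = (a \<diamond> (b \<diamond> c)) \<boxplus> \<boxminus> (a \<diamond> b)"
    unfolding lambda_def using assms by (simp add: additive.inv_mult additive.m_ac)
  finally show ?thesis
    unfolding lambda_def using assms by (simp add: circle.m_assoc)
qed

lemma lambda_one [simp]: "c \<in> A \<Longrightarrow> lambda \<one>\<^bsub>Ci\<^esub> c = c"
  unfolding lambda_def by (simp add: circle_one)

lemma lambda_circ_inv_cancel [simp]:
  "a \<in> A \<Longrightarrow> c \<in> A \<Longrightarrow> lambda (circ_inv a) (lambda a c) = c"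
  "a \<in> A \<Longrightarrow> c \<in> A \<Longrightarrow> lambda a (lambda (circ_inv a) c) = c"
  by (simp_all flip: lambda_circ)

lemma star_eq_lambda: "a \<star> b = lambda a b \<boxplus> \<boxminus> b"
  unfolding brace_star_def lambda_def ..

lemma star_closed [simp]: "a \<in> A \<Longrightarrow> b \<in> A \<Longrightarrow> a \<star> b \<in> A"
  unfolding star_eq_lambda by simp

lemma lambda_eq_star_add: "a \<in> A \<Longrightarrow> b \<in> A \<Longrightarrow> lambda a b = a \<star> b \<boxplus> b"
  unfolding star_eq_lambda by (simp add: additive.m_assoc)

lemma star_add: "a \<in> A \<Longrightarrow> b \<in> A \<Longrightarrow> c \<in> A \<Longrightarrow> a \<star> (b \<boxplus> c) = a \<star> b \<boxplus> a \<star> c"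
  unfolding star_eq_lambda by (simp add: lambda_add additive.inv_mult additive.m_ac)

lemma star_zero [simp]: "a \<in> A \<Longrightarrow> a \<star> \<zero>\<^sub>A = \<zero>\<^sub>A"
  unfolding star_eq_lambda by simp

lemma star_neg: "a \<in> A \<Longrightarrow> b \<in> A \<Longrightarrow> a \<star> (\<boxminus> b) = \<boxminus> (a \<star> b)"
  unfolding star_eq_lambda by (simp add: lambda_neg additive.inv_mult)

lemma star_nat_mult: "a \<in> A \<Longrightarrow> b \<in> A \<Longrightarrow> a \<star> (k \<bullet> b) = k \<bullet> (a \<star> b)"
  by (induction k) (auto simp: star_add)

lemma star_lambda:
  assumes "a \<in> A" "b \<in> A" "c \<in> A"
  shows "a \<star> lambda b c = (a \<diamond> b) \<star> c \<boxplus> \<boxminus> (b \<star> c)"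
proof -
  have "a \<star> lambda b c = lambda (a \<diamond> b) c \<boxplus> \<boxminus> lambda b c"
    using assms by (simp add: star_eq_lambda lambda_circ)
  also have "\<dots> = (a \<diamond> b) \<star> c \<boxplus> (c \<boxplus> (\<boxminus> c \<boxplus> \<boxminus> (b \<star> c)))"
    using assms by (simp add: lambda_eq_star_add additive.inv_mult_group additive.m_assoc)
  finally show ?thesis
    using assms by simp
qed

lemma ideal_subgroup: "brace_ideal Ad Ci I \<Longrightarrow> subgroup I Ad"
  unfolding brace_ideal_def by (elim conjE)

lemma ideal_normal: "brace_ideal Ad Ci I \<Longrightarrow> I \<lhd> Ci"
  unfolding brace_ideal_def by (elim conjE)

lemma ideal_subset: "brace_ideal Ad Ci I \<Longrightarrow> x \<in> I \<Longrightarrow> x \<in> A"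
  by (rule subgroup.mem_carrier[OF ideal_subgroup])

lemma ideal_star_closed: "brace_ideal Ad Ci I \<Longrightarrow> a \<in> A \<Longrightarrow> x \<in> I \<Longrightarrow> a \<star> x \<in> I"
  unfolding brace_ideal_def by blast

lemma ideal_lambda_closed:
  assumes I: "brace_ideal Ad Ci I" and a: "a \<in> A" and x: "x \<in> I"
  shows "lambda a x \<in> I"
  unfolding lambda_eq_star_add[OF a ideal_subset[OF I x]]
  using subgroup.m_closed[OF ideal_subgroup[OF I] ideal_star_closed[OF I a x] x] .

subsection \<open>Multiples \<open>kI\<close> of an ideal\<close>

definition scaled :: "nat \<Rightarrow> 'a set \<Rightarrow> 'a set" where
  "scaled k S = (\<lambda>a. k \<bullet> a) ` S"

lemma scaled_scaled: "S \<subseteq> A \<Longrightarrow> scaled k (scaled l S) = scaled (k * l) S"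
  unfolding scaled_def image_image
  by (intro image_cong) (auto simp: additive.nat_pow_pow mult.commute)

lemma scaled_one: "S \<subseteq> A \<Longrightarrow> scaled 1 S = S"
  unfolding scaled_def by (force simp: image_iff)

lemma subgroup_nat_mult_closed: "subgroup H Ad \<Longrightarrow> x \<in> H \<Longrightarrow> k \<bullet> x \<in> H"
  by (induction k) (auto simp: subgroup.one_closed subgroup.m_closed)

lemma subgroup_scaled:
  assumes H: "subgroup H Ad"
  shows "subgroup (scaled k H) Ad"
proof -
  have H_A: "x \<in> H \<Longrightarrow> x \<in> A" for x
    using subgroup.mem_carrier[OF H] .
  show ?thesis
  proof (rule additive.subgroupI)
    show "scaled k H \<subseteq> A"
      unfolding scaled_def using H_A by auto
    show "scaled k H \<noteq> {}"
      unfolding scaled_def using subgroup.one_closed[OF H] by blast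
  next
    fix x assume "x \<in> scaled k H"
    then obtain a where "a \<in> H" "x = k \<bullet> a"
      unfolding scaled_def by auto
    then show "\<boxminus> x \<in> scaled k H"
      unfolding scaled_def using H_A subgroup.m_inv_closed[OF H]
      by (auto simp: additive.nat_pow_inv[symmetric])
  next
    fix x z assume "x \<in> scaled k H" "z \<in> scaled k H"
    then obtain a b where "a \<in> H" "b \<in> H" "x = k \<bullet> a" "z = k \<bullet> b"
      unfolding scaled_def by auto
    then show "x \<boxplus> z \<in> scaled k H"
      unfolding scaled_def using H_A subgroup.m_closed[OF H]
      by (auto simp: additive.nat_pow_distrib[symmetric])
  qed
qed

context
  fixes I :: "'a set"
  assumes I: "brace_ideal Ad Ci I"
begin

lemma scaled_subset: "x \<in> scaled k I \<Longrightarrow> x \<in> A"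
  unfolding scaled_def using ideal_subset[OF I] by auto

lemma scaled_circ_closed:
  assumes "x \<in> scaled k I" "z \<in> scaled k I"
  shows "x \<diamond> z \<in> scaled k I"
proof -
  obtain a b where ab: "a \<in> I" "b \<in> I" "x = k \<bullet> a" "z = k \<bullet> b"
    using assms unfolding scaled_def by auto
  have A: "a \<in> A" "b \<in> A" "x \<in> A"
    using ab ideal_subset[OF I] by auto
  have "x \<diamond> z = k \<bullet> (a \<boxplus> lambda x b)"
    using ab A by (simp add: circ_eq_add_lambda lambda_nat_mult additive.nat_pow_distrib)
  then show ?thesis
    unfolding scaled_def
    using ab ideal_lambda_closed[OF I] subgroup.m_closed[OF ideal_subgroup[OF I]] A by blast
qed

lemma scaled_circ_inv_closed:
  assumes x: "x \<in> scaled k I"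
  shows "circ_inv x \<in> scaled k I"
proof -
  obtain a where a: "a \<in> I" "x = k \<bullet> a"
    using x unfolding scaled_def by auto
  have A: "a \<in> A" "x \<in> A"
    using a ideal_subset[OF I] by auto
  have "x \<boxplus> lambda x (circ_inv x) = \<zero>\<^sub>A"
    using A circle.r_inv[of x] by (simp add: circle_one flip: circ_eq_add_lambda)
  then have "lambda x (circ_inv x) = \<boxminus> x"
    using A by (metis additive.inv_equality additive.m_comm lambda_closed circ_inv_closed)
  then have "circ_inv x = lambda (circ_inv x) (\<boxminus> x)"
    using A by (metis lambda_circ_inv_cancel(1) circ_inv_closed)
  also have "\<dots> = k \<bullet> lambda (circ_inv x) (\<boxminus> a)"
    using a A by (simp add: additive.nat_pow_inv[symmetric] lambda_nat_mult)
  finally show ?thesis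
    unfolding scaled_def
    using ideal_lambda_closed[OF I] subgroup.m_inv_closed[OF ideal_subgroup[OF I]] a A by simp
qed

lemma brace_ideal_scaledI:
  assumes conj: "\<And>c x. c \<in> A \<Longrightarrow> x \<in> scaled k I \<Longrightarrow> c \<diamond> x \<diamond> circ_inv c \<in> scaled k I"
  shows "brace_ideal Ad Ci (scaled k I)"
  unfolding brace_ideal_def
proof (intro conjI ballI)
  show sub: "subgroup (scaled k I) Ad"
    using subgroup_scaled[OF ideal_subgroup[OF I]] .
  have "subgroup (scaled k I) Ci"
    using subgroup.subset[OF sub] subgroup.one_closed[OF sub] scaled_circ_closed scaled_circ_inv_closed
    by (intro circle.subgroupI) auto
  then show "scaled k I \<lhd> Ci"
    using conj by (simp add: circle.normal_inv_iff)
next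
  fix a x assume a: "a \<in> A" and "x \<in> scaled k I"
  then obtain y where "y \<in> I" "x = k \<bullet> y"
    unfolding scaled_def by auto
  then show "a \<star> x \<in> scaled k I"
    unfolding scaled_def using ideal_star_closed[OF I a] ideal_subset[OF I] a
    by (auto simp: star_nat_mult)
qed

end

subsection \<open>The series \<open>F_k\<close>\<close>

fun star_series :: "nat \<Rightarrow> 'a set" where
  "star_series 0 = {\<zero>\<^sub>A}"
| "star_series (Suc k) = {m \<in> A. \<forall>a\<in>A. a \<star> m \<in> star_series k}"

lemma subgroup_star_series: "subgroup (star_series k) Ad"
proof (induction k)
  case 0
  show ?case by (rule additive.subgroupI) auto
next
  case (Suc k)
  interpret F: subgroup "star_series k" Ad by (rule Suc)
  show ?case
    by (rule additive.subgroupI) (auto simp: star_neg star_add)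
qed

lemma star_series_subset: "x \<in> star_series k \<Longrightarrow> x \<in> A"
  using subgroup.mem_carrier[OF subgroup_star_series] .

lemma lambda_star_series: "a \<in> A \<Longrightarrow> m \<in> star_series k \<Longrightarrow> lambda a m \<in> star_series k"
proof (cases k)
  case (Suc j)
  interpret F: subgroup "star_series j" Ad by (rule subgroup_star_series)
  assume a: "a \<in> A" and m: "m \<in> star_series k"
  have "b \<star> lambda a m \<in> star_series j" if b: "b \<in> A" for b
    using m Suc a b star_series_subset[OF m] by (simp add: star_lambda)
  then show ?thesis
    using Suc a star_series_subset[OF m] by simp
qed simp

lemma star_series_mono: "k \<le> l \<Longrightarrow> star_series k \<subseteq> star_series l"
proof -
  have "star_series k \<subseteq> star_series (Suc k)" for k
    by (induction k) auto
  then show "k \<le> l \<Longrightarrow> star_series k \<subseteq> star_series l"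
    using lift_Suc_mono_le[of star_series] by blast
qed

subsection \<open>\<open>F_n = A\<close> for a brace of order \<open>p^n\<close>\<close>

lemma lambda_image_rcoset:
  assumes F: "subgroup F Ad" and inv: "\<And>a m. a \<in> A \<Longrightarrow> m \<in> F \<Longrightarrow> lambda a m \<in> F"
    and a: "a \<in> A" and m: "m \<in> A"
  shows "lambda a ` (F #>\<^bsub>Ad\<^esub> m) = F #>\<^bsub>Ad\<^esub> lambda a m"
proof
  have F_A: "h \<in> F \<Longrightarrow> h \<in> A" for h
    using subgroup.mem_carrier[OF F] .
  show "lambda a ` (F #>\<^bsub>Ad\<^esub> m) \<subseteq> F #>\<^bsub>Ad\<^esub> lambda a m"
    unfolding r_coset_def using inv a m F_A by (auto simp: lambda_add)
  show "F #>\<^bsub>Ad\<^esub> lambda a m \<subseteq> lambda a ` (F #>\<^bsub>Ad\<^esub> m)"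
  proof
    fix x assume "x \<in> F #>\<^bsub>Ad\<^esub> lambda a m"
    then obtain h where h: "h \<in> F" "x = h \<boxplus> lambda a m"
      unfolding r_coset_def by auto
    then have "x = lambda a (lambda (circ_inv a) h \<boxplus> m)"
      using a m F_A by (simp add: lambda_add)
    moreover have "lambda (circ_inv a) h \<boxplus> m \<in> F #>\<^bsub>Ad\<^esub> m"
      unfolding r_coset_def using inv h a by auto
    ultimately show "x \<in> lambda a ` (F #>\<^bsub>Ad\<^esub> m)"
      by blast
  qed
qed

lemma lambda_rcosets_action:
  assumes F: "subgroup F Ad" and inv: "\<And>a m. a \<in> A \<Longrightarrow> m \<in> F \<Longrightarrow> lambda a m \<in> F"
  shows "group_action Ci (rcosets\<^bsub>Ad\<^esub> F) (\<lambda>a. \<lambda>Q \<in> rcosets\<^bsub>Ad\<^esub> F. lambda a ` Q)"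
proof (rule circle.group_actionI)
  have coset_subset: "Q \<subseteq> A" if "Q \<in> rcosets\<^bsub>Ad\<^esub> F" for Q
    using that additive.r_coset_subset_G subgroup.subset[OF F] unfolding RCOSETS_def by blast
  show "(\<lambda>Q \<in> rcosets\<^bsub>Ad\<^esub> F. lambda a ` Q) Q \<in> rcosets\<^bsub>Ad\<^esub> F"
    if "a \<in> carrier Ci" "Q \<in> rcosets\<^bsub>Ad\<^esub> F" for a Q
    using that lambda_image_rcoset[OF F inv] additive.rcosetsI[OF subgroup.subset[OF F]]
    unfolding RCOSETS_def by auto
  show "(\<lambda>Q \<in> rcosets\<^bsub>Ad\<^esub> F. lambda \<one>\<^bsub>Ci\<^esub> ` Q) Q = Q" if "Q \<in> rcosets\<^bsub>Ad\<^esub> F" for Q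
    using that coset_subset[OF that] by (force simp: image_iff)
  show "(\<lambda>Q \<in> rcosets\<^bsub>Ad\<^esub> F. lambda (a \<diamond> b) ` Q) Q
      = (\<lambda>Q \<in> rcosets\<^bsub>Ad\<^esub> F. lambda a ` Q) ((\<lambda>Q \<in> rcosets\<^bsub>Ad\<^esub> F. lambda b ` Q) Q)"
    if "a \<in> carrier Ci" "b \<in> carrier Ci" "Q \<in> rcosets\<^bsub>Ad\<^esub> F" for a b Q
  proof -
    have "lambda b ` Q \<in> rcosets\<^bsub>Ad\<^esub> F"
      using that lambda_image_rcoset[OF F inv] additive.rcosetsI[OF subgroup.subset[OF F]]
      unfolding RCOSETS_def by auto
    then show ?thesis
      using that coset_subset[OF that(3)] by (auto simp: image_image lambda_circ subset_iff intro!: image_cong)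
  qed
qed simp

lemma star_in_subgroup_of_fixed_rcoset:
  assumes F: "subgroup F Ad" and inv: "\<And>a m. a \<in> A \<Longrightarrow> m \<in> F \<Longrightarrow> lambda a m \<in> F"
    and a: "a \<in> A" and m: "m \<in> A" and fixed: "lambda a ` (F #>\<^bsub>Ad\<^esub> m) = F #>\<^bsub>Ad\<^esub> m"
  shows "a \<star> m \<in> F"
proof -
  have "lambda a m \<in> F #>\<^bsub>Ad\<^esub> m"
    using fixed lambda_image_rcoset[OF F inv a m] additive.rcos_self[OF lambda_closed[OF a m] F] by simp
  then obtain h where "h \<in> F" "lambda a m = h \<boxplus> m"
    unfolding r_coset_def by auto
  then show ?thesis
    using m subgroup.mem_carrier[OF F] by (simp add: star_eq_lambda additive.m_assoc)
qed

context
  fixes p n :: nat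
  assumes p: "Factorial_Ring.prime p" and card_A: "card A = p ^ n"
begin

lemma finite_A: "finite A"
  using card_A p by (metis card.infinite not_prime_0 power_not_zero)

lemma card_subgroup_prime_power: "subgroup H Ad \<Longrightarrow> \<exists>j. card H = p ^ j"
  using additive.lagrange card_A divides_primepow_nat[OF p] unfolding order_def
  by (metis dvd_triv_right)

lemma prime_dvd_card_rcosets:
  assumes F: "subgroup F Ad" and proper: "F \<noteq> A"
  shows "p dvd card (rcosets\<^bsub>Ad\<^esub> F)"
proof -
  have "card (rcosets\<^bsub>Ad\<^esub> F) * card F = p ^ n"
    using additive.lagrange[OF F] card_A unfolding order_def by simp
  then obtain j where j: "card (rcosets\<^bsub>Ad\<^esub> F) = p ^ j"
    using divides_primepow_nat[OF p] by (metis dvd_triv_left)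
  have "j \<noteq> 0"
  proof
    assume "j = 0"
    then have "card F = card A"
      using j card_A \<open>card (rcosets\<^bsub>Ad\<^esub> F) * card F = p ^ n\<close> by simp
    then show False
      using proper subgroup.subset[OF F] finite_A by (metis card_subset_eq)
  qed
  then show ?thesis
    using j by simp
qed

lemma exists_star_into_invariant_subgroup:
  assumes F: "subgroup F Ad" and inv: "\<And>a m. a \<in> A \<Longrightarrow> m \<in> F \<Longrightarrow> lambda a m \<in> F"
    and proper: "F \<noteq> A"
  shows "\<exists>m\<in>A. m \<notin> F \<and> (\<forall>a\<in>A. a \<star> m \<in> F)"
proof -
  interpret action: group_action Ci "rcosets\<^bsub>Ad\<^esub> F" "\<lambda>a. \<lambda>Q \<in> rcosets\<^bsub>Ad\<^esub> F. lambda a ` Q"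
    using lambda_rcosets_action[OF F inv] .
  have F_coset: "F #>\<^bsub>Ad\<^esub> m = F" if "m \<in> F" for m
    using additive.coset_join2[OF _ F that] subgroup.mem_carrier[OF F that] .
  have F_rcosets: "F \<in> rcosets\<^bsub>Ad\<^esub> F"
    using additive.rcosetsI[OF subgroup.subset[OF F] additive.one_closed] F_coset subgroup.one_closed[OF F]
    by simp
  have F_fixed: "lambda a ` F = F" if "a \<in> A" for a
    using lambda_image_rcoset[OF F inv that additive.one_closed] F_coset subgroup.one_closed[OF F] that
    by simp
  have finite_rcosets: "finite (rcosets\<^bsub>Ad\<^esub> F)"
    unfolding RCOSETS_def using finite_A by simp
  have order_Ci: "order Ci = p ^ n"
    unfolding order_def using card_A by simp
  obtain Q where Q: "Q \<in> rcosets\<^bsub>Ad\<^esub> F" "Q \<noteq> F"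
    and Q_fixed': "\<forall>a\<in>carrier Ci. (\<lambda>Q \<in> rcosets\<^bsub>Ad\<^esub> F. lambda a ` Q) Q = Q"
    using action.prime_power_second_fixed_point[OF p order_Ci finite_rcosets
        prime_dvd_card_rcosets[OF F proper] F_rcosets] F_fixed F_rcosets by auto
  have Q_fixed: "lambda a ` Q = Q" if "a \<in> A" for a
    using Q_fixed' Q(1) that by simp
  obtain m where m: "m \<in> A" "Q = F #>\<^bsub>Ad\<^esub> m"
    using Q(1) unfolding RCOSETS_def by auto
  have "a \<star> m \<in> F" if "a \<in> A" for a
    using star_in_subgroup_of_fixed_rcoset[OF F inv that m(1)] Q_fixed[OF that] m(2) by blast
  moreover have "m \<notin> F"
    using F_coset Q m by blast
  ultimately show ?thesis
    using m by blast
qed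

lemma star_series_card: "star_series k = A \<or> p ^ k \<le> card (star_series k)"
proof (induction k)
  case (Suc k)
  show ?case
  proof (cases "star_series (Suc k) = A")
    case False
    have sub: "star_series k \<subseteq> star_series (Suc k)" "star_series (Suc k) \<subseteq> A"
      using star_series_mono[of k "Suc k"] star_series_subset by auto
    then have proper: "star_series k \<noteq> A"
      using False by blast
    then obtain m where "m \<in> A" "m \<notin> star_series k" "\<forall>a\<in>A. a \<star> m \<in> star_series k"
      using exists_star_into_invariant_subgroup[OF subgroup_star_series lambda_star_series] by blast
    then have "card (star_series k) < card (star_series (Suc k))"
      using sub finite_A by (intro psubset_card_mono) (auto intro: finite_subset)
    moreover obtain i j where "card (star_series k) = p ^ i" "card (star_series (Suc k)) = p ^ j"
      using card_subgroup_prime_power[OF subgroup_star_series] by metis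
    ultimately have "p * card (star_series k) \<le> card (star_series (Suc k))"
      using prime_gt_1_nat[OF p] power_increasing[of "Suc i" j p]
      by (simp add: Suc_le_eq)
    then show ?thesis
      using Suc.IH proper by (metis mult_le_mono2 order.trans power_Suc)
  qed simp
qed simp

lemma star_series_eq_carrier: "star_series n = A"
proof (rule ccontr)
  assume ne: "star_series n \<noteq> A"
  have "star_series n \<subseteq> A"
    using star_series_subset by blast
  moreover have "card A \<le> card (star_series n)"
    using star_series_card[of n] ne card_A by auto
  ultimately show False
    using ne finite_A by (metis card_seteq)
qed

end

subsection \<open>Binomial expansion of powers in \<open>(A, \<circ>)\<close>\<close>

fun left_star_power :: "'a \<Rightarrow> nat \<Rightarrow> 'a" where
  "left_star_power y 0 = y"
| "left_star_power y (Suc j) = y \<star> left_star_power y j"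

lemma left_star_power_closed [simp]: "y \<in> A \<Longrightarrow> left_star_power y j \<in> A"
  by (induction j) auto

lemma ideal_left_star_power: "brace_ideal Ad Ci I \<Longrightarrow> y \<in> I \<Longrightarrow> left_star_power y j \<in> I"
  by (induction j) (auto simp: ideal_subset ideal_star_closed)

lemma left_star_power_star_series:
  assumes y: "y \<in> star_series k"
  shows "left_star_power y j \<in> star_series (k - j)"
proof (induction j)
  case (Suc j)
  have y_A: "y \<in> A"
    using star_series_subset[OF y] .
  show ?case
  proof (cases "k - j")
    case 0
    then show ?thesis
      using Suc.IH y_A by simp
  next
    case (Suc i)
    then have "k - Suc j = i"
      by simp
    then show ?thesis
      using Suc Suc.IH y_A by simp
  qed
qed (use y in simp)

fun add_sum :: "(nat \<Rightarrow> 'a) \<Rightarrow> nat \<Rightarrow> 'a" where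
  "add_sum f 0 = \<zero>\<^sub>A"
| "add_sum f (Suc m) = add_sum f m \<boxplus> f m"

lemma add_sum_in_subgroup: "subgroup H Ad \<Longrightarrow> (\<And>j. j < m \<Longrightarrow> f j \<in> H) \<Longrightarrow> add_sum f m \<in> H"
  by (induction m) (auto simp: subgroup.one_closed subgroup.m_closed)

lemma add_sum_closed [simp]: "(\<And>j. j < m \<Longrightarrow> f j \<in> A) \<Longrightarrow> add_sum f m \<in> A"
  using add_sum_in_subgroup[OF additive.subgroup_self] by blast

lemma add_sum_cong: "(\<And>j. j < m \<Longrightarrow> f j = g j) \<Longrightarrow> add_sum f m = add_sum g m"
  by (induction m) auto

lemma add_sum_add:
  "(\<And>j. j < m \<Longrightarrow> f j \<in> A) \<Longrightarrow> (\<And>j. j < m \<Longrightarrow> g j \<in> A) \<Longrightarrow>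
   add_sum (\<lambda>j. f j \<boxplus> g j) m = add_sum f m \<boxplus> add_sum g m"
  by (induction m) (auto simp: additive.m_ac)

lemma add_sum_Suc_shift:
  "(\<And>j. j < Suc m \<Longrightarrow> f j \<in> A) \<Longrightarrow> add_sum f (Suc m) = f 0 \<boxplus> add_sum (\<lambda>j. f (Suc j)) m"
  by (induction m) (auto simp: additive.m_ac)

lemma star_add_sum:
  "y \<in> A \<Longrightarrow> (\<And>j. j < m \<Longrightarrow> f j \<in> A) \<Longrightarrow> y \<star> add_sum f m = add_sum (\<lambda>j. y \<star> f j) m"
  by (induction m) (auto simp: star_add)

lemma add_sum_nat_mult:
  "(\<And>j. j < m \<Longrightarrow> f j \<in> A) \<Longrightarrow> add_sum (\<lambda>j. k \<bullet> f j) m = k \<bullet> add_sum f m"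
  by (induction m) (auto simp: additive.nat_pow_distrib)

lemma circ_pow_binomial:
  assumes y: "y \<in> A"
  shows "y [^]\<^bsub>Ci\<^esub> m = add_sum (\<lambda>j. (m choose Suc j) \<bullet> left_star_power y j) m"
proof (induction m)
  case 0
  then show ?case by (simp add: circle_one)
next
  case (Suc m)
  define w where "w = add_sum (\<lambda>j. (m choose Suc j) \<bullet> left_star_power y j) m"
  have w: "w \<in> A"
    unfolding w_def using y by simp
  have star_w: "y \<star> w = add_sum (\<lambda>j. (m choose Suc j) \<bullet> left_star_power y (Suc j)) m"
    unfolding w_def using y by (simp add: star_add_sum star_nat_mult)
  have "add_sum (\<lambda>j. (Suc m choose Suc j) \<bullet> left_star_power y j) (Suc m)
      = add_sum (\<lambda>j. (m choose j) \<bullet> left_star_power y j \<boxplus> (m choose Suc j) \<bullet> left_star_power y j) (Suc m)"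
    using y by (intro add_sum_cong) (simp add: additive.nat_pow_mult)
  also have "\<dots> = add_sum (\<lambda>j. (m choose j) \<bullet> left_star_power y j) (Suc m)
      \<boxplus> add_sum (\<lambda>j. (m choose Suc j) \<bullet> left_star_power y j) (Suc m)"
    using y by (intro add_sum_add) auto
  also have "add_sum (\<lambda>j. (m choose j) \<bullet> left_star_power y j) (Suc m) = y \<boxplus> y \<star> w"
    using y by (subst add_sum_Suc_shift) (auto simp: star_w)
  also have "add_sum (\<lambda>j. (m choose Suc j) \<bullet> left_star_power y j) (Suc m) = w"
    using y by (simp add: w_def binomial_eq_0)
  also have "y \<boxplus> y \<star> w \<boxplus> w = y \<diamond> y [^]\<^bsub>Ci\<^esub> m"
    using Suc y w by (simp add: circ_eq_add_lambda lambda_eq_star_add additive.m_assoc flip: w_def)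
  finally show ?case
    using circle.nat_pow_Suc2[of y m] y by simp
qed

context
  fixes p :: nat
  assumes p: "Factorial_Ring.prime p"
begin

text \<open>This is where \<open>k < p\<close> enters: for \<open>j = p - 1\<close> the binomial coefficient is \<open>1\<close>,
  but then \<open>e_j \<in> F_(k-j) = 0\<close>.\<close>

lemma prime_choose_mult_left_star_power:
  assumes y: "y \<in> star_series k" and k: "k < p" and j: "j < p"
  shows "(p choose Suc j) \<bullet> left_star_power y j = p \<bullet> (((p choose Suc j) div p) \<bullet> left_star_power y j)"
proof (cases "Suc j < p")
  case True
  then have "p dvd p choose Suc j"
    using dvd_choose_prime[OF _ _ _ p] by simp
  then have "p choose Suc j = ((p choose Suc j) div p) * p"
    by simp
  then show ?thesis
    using star_series_subset[OF y] by (metis additive.nat_pow_pow left_star_power_closed)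
next
  case False
  then have "k - j = 0"
    using j k by simp
  then have "left_star_power y j \<in> star_series 0"
    using left_star_power_star_series[OF y, of j] by simp
  then show ?thesis
    by simp
qed

context
  fixes I :: "'a set"
  assumes I: "brace_ideal Ad Ci I"
begin

lemma circ_pow_prime_decomp:
  assumes y_I: "y \<in> I" and y_F: "y \<in> star_series k" and k: "k < p"
  shows "\<exists>w\<in>I \<inter> star_series (k - 1). y [^]\<^bsub>Ci\<^esub> p = p \<bullet> y \<boxplus> p \<bullet> w"
proof -
  have y: "y \<in> A"
    using ideal_subset[OF I y_I] .
  obtain q where q: "p = Suc q"
    using gr0_implies_Suc[OF prime_gt_0_nat[OF p]] ..
  define h where "h j = ((p choose Suc j) div p) \<bullet> left_star_power y j" for j
  have h_A: "h j \<in> A" for j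
    unfolding h_def using y by simp
  have h_0: "h 0 = y"
    unfolding h_def using y prime_gt_0_nat[OF p] by simp
  have h_Suc: "h (Suc j) \<in> I \<inter> star_series (k - 1)" for j
  proof
    show "h (Suc j) \<in> I"
      unfolding h_def
      using subgroup_nat_mult_closed[OF ideal_subgroup[OF I] ideal_left_star_power[OF I y_I]] .
    have "star_series (k - Suc j) \<subseteq> star_series (k - 1)"
      by (rule star_series_mono) simp
    then have "left_star_power y (Suc j) \<in> star_series (k - 1)"
      using left_star_power_star_series[OF y_F, of "Suc j"] by (rule subsetD)
    then show "h (Suc j) \<in> star_series (k - 1)"
      unfolding h_def using subgroup_nat_mult_closed[OF subgroup_star_series] by blast
  qed
  have shift: "add_sum h p = h 0 \<boxplus> add_sum (\<lambda>j. h (Suc j)) q"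
    unfolding q by (rule add_sum_Suc_shift) (rule h_A)
  have "y [^]\<^bsub>Ci\<^esub> p = add_sum (\<lambda>j. (p choose Suc j) \<bullet> left_star_power y j) p"
    by (rule circ_pow_binomial[OF y])
  also have "\<dots> = add_sum (\<lambda>j. p \<bullet> h j) p"
    by (rule add_sum_cong) (unfold h_def, rule prime_choose_mult_left_star_power[OF y_F k])
  also have "\<dots> = p \<bullet> add_sum h p"
    using h_A by (rule add_sum_nat_mult)
  also have "\<dots> = p \<bullet> y \<boxplus> p \<bullet> add_sum (\<lambda>j. h (Suc j)) q"
    using y h_A by (simp add: shift h_0 additive.nat_pow_distrib)
  finally have "y [^]\<^bsub>Ci\<^esub> p = p \<bullet> y \<boxplus> p \<bullet> add_sum (\<lambda>j. h (Suc j)) q" .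
  moreover have "add_sum (\<lambda>j. h (Suc j)) q \<in> I"
    by (rule add_sum_in_subgroup[OF ideal_subgroup[OF I]]) (use h_Suc in blast)
  moreover have "add_sum (\<lambda>j. h (Suc j)) q \<in> star_series (k - 1)"
    by (rule add_sum_in_subgroup[OF subgroup_star_series]) (use h_Suc in blast)
  ultimately show ?thesis
    by blast
qed

lemma circ_pow_prime_in_scaled:
  assumes y_I: "y \<in> I" and y_F: "y \<in> star_series k" and k: "k < p"
  shows "y [^]\<^bsub>Ci\<^esub> p \<in> scaled p I"
proof -
  obtain w where w: "w \<in> I" "y [^]\<^bsub>Ci\<^esub> p = p \<bullet> y \<boxplus> p \<bullet> w"
    using circ_pow_prime_decomp[OF y_I y_F k] by blast
  then have "y [^]\<^bsub>Ci\<^esub> p = p \<bullet> (y \<boxplus> w)"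
    using ideal_subset[OF I] y_I by (simp add: additive.nat_pow_distrib)
  then show ?thesis
    unfolding scaled_def using subgroup.m_closed[OF ideal_subgroup[OF I] y_I w(1)] by blast
qed

lemma prime_mult_eq_circ_pow_circ:
  assumes y_I: "y \<in> I" and y_F: "y \<in> star_series (Suc k)" and k: "Suc k < p"
  shows "\<exists>w'\<in>I \<inter> star_series k. p \<bullet> y = y [^]\<^bsub>Ci\<^esub> p \<diamond> (p \<bullet> w')"
proof -
  have y: "y \<in> A"
    using ideal_subset[OF I y_I] .
  obtain w where w: "w \<in> I" "w \<in> star_series k" "y [^]\<^bsub>Ci\<^esub> p = p \<bullet> y \<boxplus> p \<bullet> w"
    using circ_pow_prime_decomp[OF y_I y_F k] by auto
  have w_A: "w \<in> A"
    using ideal_subset[OF I w(1)] .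
  define u where "u = y [^]\<^bsub>Ci\<^esub> p"
  have u: "u \<in> A" "circ_inv u \<in> A"
    unfolding u_def using y circle.nat_pow_closed by simp_all
  define w' where "w' = \<boxminus> lambda (circ_inv u) w"
  have w'_I: "w' \<in> I"
    unfolding w'_def using subgroup.m_inv_closed[OF ideal_subgroup[OF I] ideal_lambda_closed[OF I u(2) w(1)]] .
  have w'_F: "w' \<in> star_series k"
    unfolding w'_def using subgroup.m_inv_closed[OF subgroup_star_series lambda_star_series[OF u(2) w(2)]] .
  have "lambda u w' = \<boxminus> w"
    unfolding w'_def using u w_A by (simp add: lambda_neg)
  then have "u \<diamond> (p \<bullet> w') = u \<boxplus> \<boxminus> (p \<bullet> w)"
    using u ideal_subset[OF I w'_I] w_A by (simp add: circ_eq_add_lambda lambda_nat_mult additive.nat_pow_inv)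
  also have "\<dots> = p \<bullet> y"
    using w(3) y w_A unfolding u_def by (simp add: additive.m_assoc)
  finally have "p \<bullet> y = u \<diamond> (p \<bullet> w')" ..
  then show ?thesis
    using w'_I w'_F unfolding u_def by blast
qed

lemma conj_prime_mult_in_scaled:
  assumes I_F: "I \<subseteq> star_series m" and m: "m < p"
  shows "k \<le> m \<Longrightarrow> y \<in> I \<Longrightarrow> y \<in> star_series k \<Longrightarrow> c \<in> A \<Longrightarrow> c \<diamond> (p \<bullet> y) \<diamond> circ_inv c \<in> scaled p I"
proof (induction k arbitrary: y c)
  case 0
  then have "p \<bullet> y = \<zero>\<^sub>A"
    by simp
  moreover have "c \<diamond> \<zero>\<^sub>A \<diamond> circ_inv c = \<zero>\<^sub>A"
    using \<open>c \<in> A\<close> by (simp flip: circle_one)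
  ultimately show ?case
    using subgroup.one_closed[OF subgroup_scaled[OF ideal_subgroup[OF I]]] by simp
next
  case (Suc k)
  note y_I = \<open>y \<in> I\<close> and c = \<open>c \<in> A\<close>
  have y: "y \<in> A"
    using ideal_subset[OF I y_I] .
  obtain w' where w': "w' \<in> I" "w' \<in> star_series k" "p \<bullet> y = y [^]\<^bsub>Ci\<^esub> p \<diamond> (p \<bullet> w')"
    using prime_mult_eq_circ_pow_circ[OF y_I \<open>y \<in> star_series (Suc k)\<close>] Suc.prems(1) m by auto
  have conj_y: "c \<diamond> y \<diamond> circ_inv c \<in> I"
    using normal.inv_op_closed2[OF ideal_normal[OF I] _ y_I] c by simp
  have "c \<diamond> (p \<bullet> y) \<diamond> circ_inv c
      = (c \<diamond> y \<diamond> circ_inv c) [^]\<^bsub>Ci\<^esub> p \<diamond> (c \<diamond> (p \<bullet> w') \<diamond> circ_inv c)"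
    using w'(3) circle.conj_mult circle.conj_nat_pow c y ideal_subset[OF I w'(1)] circle.nat_pow_closed
    by simp
  moreover have "(c \<diamond> y \<diamond> circ_inv c) [^]\<^bsub>Ci\<^esub> p \<in> scaled p I"
    using circ_pow_prime_in_scaled[OF conj_y _ m] I_F conj_y by blast
  moreover have "c \<diamond> (p \<bullet> w') \<diamond> circ_inv c \<in> scaled p I"
    using Suc.IH[OF _ w'(1,2) c] Suc.prems(1) by simp
  ultimately show ?case
    using scaled_circ_closed[OF I] by simp
qed

theorem brace_ideal_scaled_prime:
  assumes I_F: "I \<subseteq> star_series m" and m: "m < p"
  shows "brace_ideal Ad Ci (scaled p I)"
proof (rule brace_ideal_scaledI[OF I])
  fix c x assume c: "c \<in> A" and "x \<in> scaled p I"
  then obtain y where "y \<in> I" "x = p \<bullet> y"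
    unfolding scaled_def by blast
  then show "c \<diamond> x \<diamond> circ_inv c \<in> scaled p I"
    using conj_prime_mult_in_scaled[OF I_F m order.refl] I_F c by blast
qed

end

end

end

theorem corollary14:
  fixes Ad Ci :: "'a monoid" and p n i :: nat and I :: "'a set"
  assumes "brace Ad Ci"
    and "Factorial_Ring.prime p" and "p > n + 1"
    and "finite (carrier Ad)" and "card (carrier Ad) = p ^ n"
    and "brace_ideal Ad Ci I"
  shows "brace_ideal Ad Ci ((\<lambda>a. a [^]\<^bsub>Ad\<^esub> (p ^ i)) ` I)"
proof -
  interpret left_brace Ad Ci
    by unfold_locales (rule assms(1))
  have I_A: "I \<subseteq> carrier Ad"
    using ideal_subset[OF assms(6)] by blast
  have "brace_ideal Ad Ci (scaled (p ^ i) I)"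
  proof (induction i)
    case 0
    then show ?case
      using assms(6) scaled_one[OF I_A] by simp
  next
    case (Suc i)
    have "scaled (p ^ i) I \<subseteq> star_series n"
      using star_series_eq_carrier[OF assms(2,5)] scaled_subset[OF assms(6)] by blast
    then have "brace_ideal Ad Ci (scaled p (scaled (p ^ i) I))"
      using brace_ideal_scaled_prime[OF assms(2) Suc] assms(3) by simp
    then show ?case
      using I_A by (simp add: scaled_scaled)
  qed
  then show ?thesis
    unfolding scaled_def .
qed

end
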